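(* For $z\in\mathbb{R}^d$ define $\|z\|_{1,\text{top-}\alpha\%}:=\|z\odot\texttt{FLT}_\alpha(z)\|_1$. Then $\|\cdot\|_{1,\text{top-}\alpha\%}$ is a norm on $\mathbb{R}^d$.
   Context: The coordinates of $\mathbb{R}^d$ are partitioned into $B$ blocks of sizes $d_1,\dots,d_B$ with $\sum_kd_k=d$; write $z=(z^{(1)},\dots,z^{(B)})$, $z^{(k)}\in\mathbb{R}^{d_k}$. Fix $\alpha\%\in(0,1]$. The top-$\alpha\%$ filter $\texttt{FLT}_\alpha(z)\in\{0,1\}^d$ is defined blockwise: in block $k$ it equals $1$ exactly on a set $S_k$ of $\lceil d_k\cdot\alpha\%\rceil$ indices whose absolute values $|z^{(k)}_i|$ rank within the top-$\alpha\%$ of the block (when several entries have equal absolute value, those with smallest indices are selected first), and $0$ elsewhere. $\odot$ is the entrywise product. *)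

theory Defs
  imports Complex_Main
begin

text \<open>Vectors of R^d are represented as functions nat => real vanishing at indices >= d
(coordinates 0..d-1). The block partition is given by the list ds of block sizes
d_1,...,d_B; block k (0-based) occupies the contiguous index range starting at
the sum of the preceding block sizes.\<close>

definition blk_start :: "nat list \<Rightarrow> nat \<Rightarrow> nat" where
  "blk_start ds k = sum_list (take k ds)"

definition blk :: "nat list \<Rightarrow> nat \<Rightarrow> nat set" where
  "blk ds k = {blk_start ds k ..< blk_start ds k + ds ! k}"

definition blk_rank :: "(nat \<Rightarrow> real) \<Rightarrow> nat set \<Rightarrow> nat \<Rightarrow> nat" where
  "blk_rank z S i = card {j \<in> S. \<bar>z j\<bar> > \<bar>z i\<bar> \<or> (\<bar>z j\<bar> = \<bar>z i\<bar> \<and> j < i)}"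

definition FLT :: "nat list \<Rightarrow> real \<Rightarrow> (nat \<Rightarrow> real) \<Rightarrow> nat \<Rightarrow> real" where
  "FLT ds \<alpha> z i = (if \<exists>k < length ds. i \<in> blk ds k \<and>
       blk_rank z (blk ds k) i < nat \<lceil>real (ds ! k) * \<alpha>\<rceil> then 1 else 0)"

definition top_norm :: "nat list \<Rightarrow> real \<Rightarrow> (nat \<Rightarrow> real) \<Rightarrow> real" where
  "top_norm ds \<alpha> z = (\<Sum>i < sum_list ds. \<bar>z i * FLT ds \<alpha> z i\<bar>)"

definition vecs :: "nat \<Rightarrow> (nat \<Rightarrow> real) set" where
  "vecs d = {z. \<forall>i \<ge> d. z i = 0}"

definition is_norm_on :: "(nat \<Rightarrow> real) set \<Rightarrow> ((nat \<Rightarrow> real) \<Rightarrow> real) \<Rightarrow> bool" where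
  "is_norm_on V N \<longleftrightarrow>
     (\<forall>z \<in> V. N z \<ge> 0) \<and>
     (\<forall>z \<in> V. N z = 0 \<longleftrightarrow> z = (\<lambda>_. 0)) \<and>
     (\<forall>c::real. \<forall>z \<in> V. N (\<lambda>i. c * z i) = \<bar>c\<bar> * N z) \<and>
     (\<forall>x \<in> V. \<forall>y \<in> V. N (\<lambda>i. x i + y i) \<le> N x + N y)"

end

theory Submission
  imports Defs
begin

text \<open>In a block S with quota m the filter selects m indices of largest absolute value,
so the contribution of S is the largest value of \<open>\<Sum>i\<in>T. \<bar>z i\<bar>\<close> over subsets T of S with
at most m elements. Each such sum is a seminorm, and a pointwise maximum of seminorms is
again a seminorm; summing over the blocks gives homogeneity and the triangle inequality.
Definiteness holds because \<open>\<alpha> > 0\<close> makes every quota of a nonempty block at least 1,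
so the largest entry of each block is always counted.\<close>

lemma sum_le_sum_if_dominated:
  fixes f :: "'a \<Rightarrow> 'b::linordered_idom"
  assumes "finite B" "card A \<le> card B"
    and dom: "\<And>a b. a \<in> A \<Longrightarrow> b \<in> B \<Longrightarrow> f a \<le> f b"
    and nonneg: "\<And>b. b \<in> B \<Longrightarrow> 0 \<le> f b"
  shows "sum f A \<le> sum f B"
proof (cases "A = {} \<or> infinite A")
  case True
  then show ?thesis by (auto intro!: sum_nonneg nonneg)
next
  case False
  then have "B \<noteq> {}" using assms(2) by auto
  define a where "a = Min (f ` B)"
  have "a \<in> f ` B" unfolding a_def using \<open>finite B\<close> \<open>B \<noteq> {}\<close> by simp
  then have a_nonneg: "0 \<le> a" and above_a: "\<And>x. x \<in> A \<Longrightarrow> f x \<le> a"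
    using nonneg dom by auto
  have "sum f A \<le> of_nat (card A) * a" using above_a by (rule sum_bounded_above)
  also have "\<dots> \<le> of_nat (card B) * a" using assms(2) a_nonneg by (simp add: mult_right_mono)
  also have "\<dots> \<le> sum f B" unfolding a_def using \<open>finite B\<close> by (intro sum_bounded_below) simp
  finally show ?thesis .
qed

definition top_ranked :: "(nat \<Rightarrow> real) \<Rightarrow> nat set \<Rightarrow> nat \<Rightarrow> nat set" where
  "top_ranked z S m = {i \<in> S. blk_rank z S i < m}"

lemma blk_rank_less:
  assumes "finite S" "i \<in> S" "j \<in> S"
    and "\<bar>z j\<bar> > \<bar>z i\<bar> \<or> (\<bar>z j\<bar> = \<bar>z i\<bar> \<and> j < i)"
  shows "blk_rank z S j < blk_rank z S i"
  unfolding blk_rank_def by (rule psubset_card_mono) (use assms in auto)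

lemma blk_rank_less_card:
  assumes "finite S" "i \<in> S"
  shows "blk_rank z S i < card S"
  unfolding blk_rank_def by (rule psubset_card_mono) (use assms in auto)

lemma inj_on_blk_rank:
  assumes "finite S"
  shows "inj_on (blk_rank z S) S"
proof (rule inj_onI, rule ccontr)
  fix i j assume "i \<in> S" "j \<in> S" "blk_rank z S i = blk_rank z S j" "i \<noteq> j"
  then show False
    using blk_rank_less[OF assms \<open>i \<in> S\<close> \<open>j \<in> S\<close>, of z]
      blk_rank_less[OF assms \<open>j \<in> S\<close> \<open>i \<in> S\<close>, of z]
    by (metis less_irrefl linorder_neqE_linordered_idom linorder_neqE_nat)
qed

lemma bij_betw_blk_rank:
  assumes "finite S"
  shows "bij_betw (blk_rank z S) S {..<card S}"
proof -
  have "blk_rank z S ` S \<subseteq> {..<card S}" using blk_rank_less_card[OF assms] by auto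
  moreover have "card (blk_rank z S ` S) = card S"
    using card_image[OF inj_on_blk_rank[OF assms]] .
  ultimately have "blk_rank z S ` S = {..<card S}" by (simp add: card_subset_eq)
  then show ?thesis using inj_on_blk_rank[OF assms] by (simp add: bij_betw_def)
qed

lemma card_top_ranked:
  assumes "finite S"
  shows "card (top_ranked z S m) = min m (card S)"
proof -
  have "bij_betw (blk_rank z S) (top_ranked z S m) {k \<in> {..<card S}. k < m}"
    using bij_betw_blk_rank[OF assms, of z]
    unfolding top_ranked_def bij_betw_def inj_on_def by auto
  then have "card (top_ranked z S m) = card {k \<in> {..<card S}. k < m}"
    by (rule bij_betw_same_card)
  also have "{k \<in> {..<card S}. k < m} = {..<min m (card S)}" by auto
  finally show ?thesis by simp
qed

lemma abs_le_top_ranked: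
  assumes "finite S" "i \<in> top_ranked z S m" "j \<in> S - top_ranked z S m"
  shows "\<bar>z j\<bar> \<le> \<bar>z i\<bar>"
  using assms blk_rank_less[OF assms(1), of i j z] unfolding top_ranked_def by force

lemma card_diff_top_ranked_le:
  assumes "finite S" "T \<subseteq> S" "card T \<le> m"
  shows "card (T - top_ranked z S m) \<le> card (top_ranked z S m - T)"
proof (cases "top_ranked z S m = S")
  case True
  then show ?thesis using assms(2) by (metis Diff_eq_empty_iff card.empty zero_le)
next
  case False
  let ?R = "top_ranked z S m"
  have "?R \<subset> S" using False unfolding top_ranked_def by auto
  then have "card ?R = m"
    using card_top_ranked[OF assms(1), of z m] psubset_card_mono[OF assms(1) \<open>?R \<subset> S\<close>] by linarith
  moreover have "finite T" "finite ?R"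
    using assms(1,2) finite_subset unfolding top_ranked_def by auto
  ultimately show ?thesis
    using assms(3) by (simp add: card_Diff_subset_Int Int_commute)
qed

text \<open>Outside their intersection, T has at most as many indices as the top-ranked set,
and each of its entries is dominated by each entry of the top-ranked set.\<close>

lemma sum_abs_le_sum_top_ranked:
  assumes "finite S" "T \<subseteq> S" "card T \<le> m"
  shows "(\<Sum>i\<in>T. \<bar>z i\<bar>) \<le> (\<Sum>i\<in>top_ranked z S m. \<bar>z i\<bar>)"
proof -
  let ?R = "top_ranked z S m"
  have fin: "finite T" "finite ?R"
    using assms(1,2) finite_subset unfolding top_ranked_def by auto
  have "(\<Sum>i\<in>T - ?R. \<bar>z i\<bar>) \<le> (\<Sum>i\<in>?R - T. \<bar>z i\<bar>)"
    using fin card_diff_top_ranked_le[OF assms] abs_le_top_ranked[OF assms(1)] assms(2)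
    by (intro sum_le_sum_if_dominated) auto
  moreover have "(\<Sum>i\<in>T. \<bar>z i\<bar>) = (\<Sum>i\<in>T - ?R. \<bar>z i\<bar>) + (\<Sum>i\<in>T \<inter> ?R. \<bar>z i\<bar>)"
    using sum.Int_Diff[OF fin(1)] by (simp add: add.commute)
  moreover have "(\<Sum>i\<in>?R. \<bar>z i\<bar>) = (\<Sum>i\<in>?R - T. \<bar>z i\<bar>) + (\<Sum>i\<in>T \<inter> ?R. \<bar>z i\<bar>)"
    using sum.Int_Diff[OF fin(2)] by (simp add: add.commute Int_commute)
  ultimately show ?thesis by linarith
qed

lemma top_ranked_scale:
  assumes "c \<noteq> 0"
  shows "top_ranked (\<lambda>i. c * z i) S m = top_ranked z S m"
  using assms unfolding top_ranked_def blk_rank_def by (simp add: abs_mult)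

lemma blk_start_mono: "k \<le> k' \<Longrightarrow> blk_start ds k \<le> blk_start ds k'"
  unfolding blk_start_def by (metis le_add1 le_add_diff_inverse sum_list_append take_add)

lemma blk_start_Suc: "k < length ds \<Longrightarrow> blk_start ds (Suc k) = blk_start ds k + ds ! k"
  unfolding blk_start_def by (simp add: take_Suc_conv_app_nth)

lemma blk_unique:
  assumes "k < length ds" "k' < length ds" "i \<in> blk ds k" "i \<in> blk ds k'"
  shows "k = k'"
proof -
  have "\<not> i \<in> blk ds k'" if "k < k'" "k < length ds" "i \<in> blk ds k" for k k'
    using that blk_start_Suc[of k ds] blk_start_mono[of "Suc k" k' ds] unfolding blk_def by auto
  then show ?thesis using assms by (metis linorder_neqE_nat)
qed

lemma lessThan_sum_list_eq_UN_blk: "{..<sum_list ds} = (\<Union>k<length ds. blk ds k)"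
proof (induction ds rule: rev_induct)
  case Nil
  then show ?case by simp
next
  case (snoc a ds)
  have "blk (ds @ [a]) k = blk ds k" if "k < length ds" for k
    using that unfolding blk_def blk_start_def by (simp add: nth_append)
  moreover have "blk (ds @ [a]) (length ds) = {sum_list ds..<sum_list ds + a}"
    unfolding blk_def blk_start_def by simp
  ultimately have "(\<Union>k<length (ds @ [a]). blk (ds @ [a]) k)
      = {..<sum_list ds} \<union> {sum_list ds..<sum_list ds + a}"
    using snoc.IH by (simp add: lessThan_Suc Un_commute)
  also have "\<dots> = {..<sum_list (ds @ [a])}" by auto
  finally show ?case by simp
qed

definition blk_quota :: "nat list \<Rightarrow> real \<Rightarrow> nat \<Rightarrow> nat" where
  "blk_quota ds \<alpha> k = nat \<lceil>real (ds ! k) * \<alpha>\<rceil>"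

definition blk_top :: "nat list \<Rightarrow> real \<Rightarrow> (nat \<Rightarrow> real) \<Rightarrow> nat \<Rightarrow> nat set" where
  "blk_top ds \<alpha> z k = top_ranked z (blk ds k) (blk_quota ds \<alpha> k)"

lemma FLT_on_blk:
  assumes "k < length ds" "i \<in> blk ds k"
  shows "FLT ds \<alpha> z i = (if i \<in> blk_top ds \<alpha> z k then 1 else 0)"
proof -
  have "(\<exists>k'<length ds. i \<in> blk ds k' \<and> blk_rank z (blk ds k') i < blk_quota ds \<alpha> k')
      \<longleftrightarrow> blk_rank z (blk ds k) i < blk_quota ds \<alpha> k"
    using assms blk_unique[OF assms(1) _ assms(2)] by blast
  then show ?thesis
    using assms(2) unfolding FLT_def blk_top_def top_ranked_def blk_quota_def by simp
qed

lemma finite_blk: "finite (blk ds k)"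
  by (simp add: blk_def)

lemma blk_top_subset_blk: "blk_top ds \<alpha> z k \<subseteq> blk ds k"
  by (auto simp: blk_top_def top_ranked_def)

lemma top_norm_eq_sum_blk_top:
  "top_norm ds \<alpha> z = (\<Sum>k<length ds. \<Sum>i\<in>blk_top ds \<alpha> z k. \<bar>z i\<bar>)"
proof -
  have disjoint: "\<forall>k\<in>{..<length ds}. \<forall>k'\<in>{..<length ds}. k \<noteq> k' \<longrightarrow> blk ds k \<inter> blk ds k' = {}"
    using blk_unique by blast
  have "top_norm ds \<alpha> z = (\<Sum>k<length ds. \<Sum>i\<in>blk ds k. \<bar>z i * FLT ds \<alpha> z i\<bar>)"
    unfolding top_norm_def lessThan_sum_list_eq_UN_blk
    by (rule sum.UNION_disjoint[OF finite_lessThan _ disjoint]) (simp add: finite_blk)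
  also have "\<dots> = (\<Sum>k<length ds. \<Sum>i\<in>blk ds k. if i \<in> blk_top ds \<alpha> z k then \<bar>z i\<bar> else 0)"
  proof (intro sum.cong refl)
    fix k i assume "k \<in> {..<length ds}" "i \<in> blk ds k"
    then show "\<bar>z i * FLT ds \<alpha> z i\<bar> = (if i \<in> blk_top ds \<alpha> z k then \<bar>z i\<bar> else 0)"
      by (simp add: FLT_on_blk[of k ds i])
  qed
  also have "\<dots> = (\<Sum>k<length ds. \<Sum>i\<in>blk_top ds \<alpha> z k. \<bar>z i\<bar>)"
    using blk_top_subset_blk
    by (simp add: sum.If_cases[OF finite_blk] Int_absorb1 flip: Collect_mem_eq)
  finally show ?thesis .
qed

lemma sum_abs_le_sum_blk_top:
  assumes "T \<subseteq> blk ds k" "card T \<le> blk_quota ds \<alpha> k"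
  shows "(\<Sum>i\<in>T. \<bar>z i\<bar>) \<le> (\<Sum>i\<in>blk_top ds \<alpha> z k. \<bar>z i\<bar>)"
  unfolding blk_top_def using assms by (intro sum_abs_le_sum_top_ranked) (auto simp: blk_def)

lemma card_blk_top: "card (blk_top ds \<alpha> z k) \<le> blk_quota ds \<alpha> k"
  unfolding blk_top_def by (simp add: card_top_ranked blk_def)

lemma top_norm_nonneg: "0 \<le> top_norm ds \<alpha> z"
  unfolding top_norm_def by (simp add: sum_nonneg)

lemma abs_le_top_norm:
  assumes "0 < \<alpha>" "i < sum_list ds"
  shows "\<bar>z i\<bar> \<le> top_norm ds \<alpha> z"
proof -
  obtain k where k: "k < length ds" "i \<in> blk ds k"
    using assms(2) lessThan_sum_list_eq_UN_blk by blast
  then have "0 < real (ds ! k) * \<alpha>" using assms(1) unfolding blk_def by auto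
  then have "card {i} \<le> blk_quota ds \<alpha> k" unfolding blk_quota_def by simp linarith
  then have "(\<Sum>j\<in>{i}. \<bar>z j\<bar>) \<le> (\<Sum>j\<in>blk_top ds \<alpha> z k. \<bar>z j\<bar>)"
    using k by (intro sum_abs_le_sum_blk_top) auto
  also have "\<dots> \<le> top_norm ds \<alpha> z"
    unfolding top_norm_eq_sum_blk_top using k
    by (intro member_le_sum) (auto intro: sum_nonneg)
  finally show ?thesis by simp
qed

lemma top_norm_eq_0_iff:
  assumes "0 < \<alpha>" "z \<in> vecs (sum_list ds)"
  shows "top_norm ds \<alpha> z = 0 \<longleftrightarrow> z = (\<lambda>_. 0)"
proof
  assume "top_norm ds \<alpha> z = 0"
  then have "z i = 0" if "i < sum_list ds" for i
    using abs_le_top_norm[OF assms(1) that, of z] by simp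
  moreover have "z i = 0" if "\<not> i < sum_list ds" for i
    using assms(2) that unfolding vecs_def by simp
  ultimately show "z = (\<lambda>_. 0)" by blast
qed (simp add: top_norm_def)

lemma top_norm_scale: "top_norm ds \<alpha> (\<lambda>i. c * z i) = \<bar>c\<bar> * top_norm ds \<alpha> z"
proof (cases "c = 0")
  case True
  then show ?thesis by (simp add: top_norm_def)
next
  case False
  then have "blk_top ds \<alpha> (\<lambda>i. c * z i) k = blk_top ds \<alpha> z k" for k
    unfolding blk_top_def by (rule top_ranked_scale)
  then show ?thesis
    by (simp add: top_norm_eq_sum_blk_top abs_mult sum_distrib_left)
qed

lemma top_norm_triangle:
  "top_norm ds \<alpha> (\<lambda>i. x i + y i) \<le> top_norm ds \<alpha> x + top_norm ds \<alpha> y"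
proof -
  let ?T = "blk_top ds \<alpha> (\<lambda>i. x i + y i)"
  have "(\<Sum>i\<in>?T k. \<bar>x i + y i\<bar>)
      \<le> (\<Sum>i\<in>blk_top ds \<alpha> x k. \<bar>x i\<bar>) + (\<Sum>i\<in>blk_top ds \<alpha> y k. \<bar>y i\<bar>)" for k
  proof -
    have "(\<Sum>i\<in>?T k. \<bar>x i + y i\<bar>) \<le> (\<Sum>i\<in>?T k. \<bar>x i\<bar>) + (\<Sum>i\<in>?T k. \<bar>y i\<bar>)"
      unfolding sum.distrib[symmetric] by (intro sum_mono abs_triangle_ineq)
    also have "\<dots> \<le> (\<Sum>i\<in>blk_top ds \<alpha> x k. \<bar>x i\<bar>) + (\<Sum>i\<in>blk_top ds \<alpha> y k. \<bar>y i\<bar>)"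
      by (intro add_mono sum_abs_le_sum_blk_top blk_top_subset_blk card_blk_top)
    finally show ?thesis .
  qed
  then show ?thesis
    unfolding top_norm_eq_sum_blk_top sum.distrib[symmetric] by (intro sum_mono)
qed

theorem proposition1:
  fixes ds :: "nat list" and \<alpha> :: real
  assumes "0 < \<alpha>" and "\<alpha> \<le> 1"
  shows "is_norm_on (vecs (sum_list ds)) (top_norm ds \<alpha>)"
  using top_norm_nonneg top_norm_eq_0_iff[OF \<open>0 < \<alpha>\<close>] top_norm_scale top_norm_triangle
  unfolding is_norm_on_def by blast

end
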